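(* Let $\{p^\circ_{(R,\alpha)}\}_{(R,\alpha)}$ be a replacement rule satisfying the Fixation Axiom and representing neutral drift. Then for every state $\mathbf{x}\in\{0,1\}^G\setminus\{\mathbf{a},\mathbf{A}\}$, $\pi_{\mathrm{RMC}}(\bar{\mathbf{x}})=\pi_{\mathrm{RMC}}(\mathbf{x})$, where $\bar{\mathbf{x}}$ is defined by $\bar x_g=1-x_g$ for all $g\in G$.
   Context: Setting. $G$ is a finite nonempty set of genetic sites. A state is $\mathbf{x}\in\{0,1\}^G$; $\mathbf{a}$ is the all-zero state and $\mathbf{A}$ the all-one state. A replacement event is $(R,\alpha)$ with $R\subseteq G$, $\alpha:R\to G$. A replacement rule representing neutral drift is a single probability distribution $\{p^\circ_{(R,\alpha)}\}$ over events, used in every state. With mutation probability $u\in[0,1]$ and bias $\nu\in(0,1)$, the evolutionary Markov chain moves from $\mathbf{x}$: draw $(R,\alpha)$ with probability $p^\circ_{(R,\alpha)}$; independently for $g\in R$, $x'_g=x_{\alpha(g)}$ w.p. $1-u$, $x'_g=1$ w.p. $u\nu$, $x'_g=0$ w.p. $u(1-\nu)$; $x'_g=x_g$ for $g\notin R$. Fixation Axiom: there exist $g\in G$, $m\ge1$, events $(R_k,\alpha_k)_{k=1}^m$ with $p^\circ_{(R_k,\alpha_k)}>0$, $g\in R_k$ for some $k$, and $\tilde\alpha_1\circ\cdots\circ\tilde\alpha_m(h)=g$ for all $h$, where $\tilde\alpha_k$ equals $\alpha_k$ on $R_k$ and the identity elsewhere. For $u>0$ the chain has a unique stationary distribution $\pi_{\mathrm{MSS}}$;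 the rare-mutation conditional distribution is $\pi_{\mathrm{RMC}}(\mathbf{x})=\lim_{u\to0}\pi_{\mathrm{MSS}}(\mathbf{x})/(1-\pi_{\mathrm{MSS}}(\mathbf{a})-\pi_{\mathrm{MSS}}(\mathbf{A}))$ for $\mathbf{x}\notin\{\mathbf{a},\mathbf{A}\}$ (the limit exists and does not depend on $\nu$). *)

theory Defs
  imports "HOL-Analysis.Analysis"
begin

text \<open>A state is a function
'g \<Rightarrow> bool (True = 1, False = 0). A replacement event (R, alpha) with alpha : R \<rightarrow> G
is represented as a pair (R, alpha) with alpha :: 'g \<Rightarrow> 'g, canonically normalised to
be the identity outside R.\<close>

type_synonym 'g state = "'g \<Rightarrow> bool"
type_synonym 'g event = "'g set \<times> ('g \<Rightarrow> 'g)"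

definition all_zero :: "'g state" where "all_zero = (\<lambda>_. False)"
definition all_one :: "'g state" where "all_one = (\<lambda>_. True)"

definition complement_state :: "'g state \<Rightarrow> 'g state" where
  "complement_state x = (\<lambda>g. \<not> x g)"

text \<open>A replacement rule representing neutral drift: one probability distribution over
events, used in every state.\<close>
definition replacement_rule :: "('g::finite event \<Rightarrow> real) \<Rightarrow> bool" where
  "replacement_rule p \<longleftrightarrow>
     (\<forall>e. p e \<ge> 0) \<and> (\<Sum>e\<in>UNIV. p e) = 1 \<and>
     (\<forall>R \<alpha>. p (R, \<alpha>) > 0 \<longrightarrow> (\<forall>g. g \<notin> R \<longrightarrow> \<alpha> g = g))"

definition extend_event :: "'g event \<Rightarrow> ('g \<Rightarrow> 'g)" where
  "extend_event e = (\<lambda>h. if h \<in> fst e then snd e h else h)"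

definition fixation_axiom :: "('g::finite event \<Rightarrow> real) \<Rightarrow> bool" where
  "fixation_axiom p \<longleftrightarrow>
     (\<exists>g (es :: 'g event list). length es \<ge> 1 \<and> (\<forall>e\<in>set es. p e > 0) \<and>
        (\<exists>e\<in>set es. g \<in> fst e) \<and>
        (\<forall>h. foldr (\<circ>) (map extend_event es) id h = g))"

definition site_prob :: "real \<Rightarrow> real \<Rightarrow> 'g state \<Rightarrow> ('g \<Rightarrow> 'g) \<Rightarrow> 'g \<Rightarrow> bool \<Rightarrow> real" where
  "site_prob u \<nu> x \<alpha> g b =
     (if b = x (\<alpha> g) then 1 - u else 0) + (if b then u * \<nu> else u * (1 - \<nu>))"

definition trans_prob :: "('g::finite event \<Rightarrow> real) \<Rightarrow> real \<Rightarrow> real \<Rightarrow> 'g state \<Rightarrow> 'g state \<Rightarrow> real" where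
  "trans_prob p u \<nu> x y =
     (\<Sum>e\<in>UNIV. p e *
        (\<Prod>g\<in>UNIV. if g \<in> fst e then site_prob u \<nu> x (snd e) g (y g)
                    else (if y g = x g then 1 else 0)))"

definition is_stationary :: "('g::finite event \<Rightarrow> real) \<Rightarrow> real \<Rightarrow> real \<Rightarrow> ('g state \<Rightarrow> real) \<Rightarrow> bool" where
  "is_stationary p u \<nu> \<pi> \<longleftrightarrow>
     (\<forall>x. \<pi> x \<ge> 0) \<and> (\<Sum>x\<in>UNIV. \<pi> x) = 1 \<and>
     (\<forall>y. (\<Sum>x\<in>UNIV. \<pi> x * trans_prob p u \<nu> x y) = \<pi> y)"

text \<open>The (unique, for u > 0) stationary distribution.\<close>
definition pi_MSS :: "('g::finite event \<Rightarrow> real) \<Rightarrow> real \<Rightarrow> real \<Rightarrow> 'g state \<Rightarrow> real" where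
  "pi_MSS p u \<nu> = (THE \<pi>. is_stationary p u \<nu> \<pi>)"

definition pi_RMC :: "('g::finite event \<Rightarrow> real) \<Rightarrow> real \<Rightarrow> 'g state \<Rightarrow> real" where
  "pi_RMC p \<nu> x = Lim (at_right 0)
     (\<lambda>u. pi_MSS p u \<nu> x / (1 - pi_MSS p u \<nu> all_zero - pi_MSS p u \<nu> all_one))"

end

(* For u > 0 every state can reach all_zero, so the stationary distribution pi_u of the
   evolutionary chain is unique. On the polymorphic states the rescaled distribution
   v_u = pi_u / u solves v_u = pi_u(a) K_u(a, -) / u + pi_u(A) K_u(A, -) / u + v_u K_u, and the
   chain killed on leaving the polymorphic states escapes within a fixed number of steps with
   probability bounded below uniformly in u (follow the replacement events of the Fixation
   Axiom). This stability turns the first-order expansions K_u(a, y) / u -> nu m(y) and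
   K_u(A, y) / u -> (1 - nu) m(complement y) into
     v_u(y) - (pi_u(a) nu w(y) + pi_u(A) (1 - nu) w(complement y)) -> 0,
   where m is the single-mutant distribution and w the expected sojourn of the mutation-free
   chain started from it; the equation for w(complement y) comes from the symmetry
   K_0(complement x, complement y) = K_0(x, y). Balancing the flux into a then forces
   pi_u(a) nu - pi_u(A) (1 - nu) -> 0, so pi_u(a) -> 1 - nu, pi_u(A) -> nu, and pi_RMC(y) is
   proportional to w(y) + w(complement y), which is invariant under complementation. *)

theory Submission
  imports Defs
begin

section \<open>Killed Markov kernels\<close>

text \<open>Vectors are row vectors acting on the left of \<open>K\<close>; killing on leaving \<open>B\<close> restricts every
  intermediate state to \<open>B\<close>, so \<open>survival K B k x\<close> is the probability of staying in \<open>B\<close> for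
  \<open>k\<close> steps from \<open>x\<close>.\<close>

definition killed_step :: "('s::finite \<Rightarrow> 's \<Rightarrow> real) \<Rightarrow> 's set \<Rightarrow> ('s \<Rightarrow> real) \<Rightarrow> 's \<Rightarrow> real" where
  "killed_step K B v y = (\<Sum>x\<in>B. v x * K x y)"

fun killed_trans :: "('s::finite \<Rightarrow> 's \<Rightarrow> real) \<Rightarrow> 's set \<Rightarrow> nat \<Rightarrow> 's \<Rightarrow> 's \<Rightarrow> real" where
  "killed_trans K B 0 x y = (if x = y then 1 else 0)"
| "killed_trans K B (Suc k) x y = (\<Sum>z\<in>B. K x z * killed_trans K B k z y)"

definition survival :: "('s::finite \<Rightarrow> 's \<Rightarrow> real) \<Rightarrow> 's set \<Rightarrow> nat \<Rightarrow> 's \<Rightarrow> real" where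
  "survival K B k x = (\<Sum>y\<in>B. killed_trans K B k x y)"

definition l1_norm_on :: "'s set \<Rightarrow> ('s \<Rightarrow> real) \<Rightarrow> real" where
  "l1_norm_on B v = (\<Sum>y\<in>B. \<bar>v y\<bar>)"

definition uniformly_escapes :: "('s::finite \<Rightarrow> 's \<Rightarrow> real) \<Rightarrow> 's set \<Rightarrow> nat \<Rightarrow> real \<Rightarrow> bool" where
  "uniformly_escapes K B M \<delta> \<longleftrightarrow> 0 < \<delta> \<and> (\<forall>x\<in>B. survival K B M x \<le> 1 - \<delta>)"

lemma l1_norm_on_nonneg: "0 \<le> l1_norm_on B v"
  unfolding l1_norm_on_def by (simp add: sum_nonneg)

lemma killed_step_diff:
  "killed_step K B (\<lambda>x. a * v x - b * w x) y = a * killed_step K B v y - b * killed_step K B w y"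
  unfolding killed_step_def by (simp add: sum_subtractf sum_distrib_left algebra_simps)

lemma killed_step_add:
  "killed_step K B (\<lambda>x. a * v x + b * w x) y = a * killed_step K B v y + b * killed_step K B w y"
  unfolding killed_step_def by (simp add: sum.distrib sum_distrib_left algebra_simps)

lemma killed_step_power_add:
  "(killed_step K B ^^ k) (\<lambda>x. v x + w x) = (\<lambda>y. (killed_step K B ^^ k) v y + (killed_step K B ^^ k) w y)"
  by (induction k) (simp_all add: killed_step_def algebra_simps sum.distrib)

locale substochastic_kernel =
  fixes K :: "'s::finite \<Rightarrow> 's \<Rightarrow> real"
  assumes nonneg: "0 \<le> K x y"
    and row_sum_le: "(\<Sum>y\<in>UNIV. K x y) \<le> 1"
begin

lemma row_sum_on_le: "(\<Sum>y\<in>B. K x y) \<le> 1"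
  using sum_mono2[of UNIV B "K x"] nonneg row_sum_le[of x] by fastforce

lemma entry_le_1: "K x y \<le> 1"
  using row_sum_on_le[of x "{y}"] by simp

lemma killed_trans_nonneg: "0 \<le> killed_trans K B k x y"
  by (induction k arbitrary: x) (auto intro!: sum_nonneg mult_nonneg_nonneg nonneg)

lemma killed_step_nonneg: "(\<And>x. x \<in> B \<Longrightarrow> 0 \<le> v x) \<Longrightarrow> 0 \<le> killed_step K B v y"
  unfolding killed_step_def by (auto intro!: sum_nonneg mult_nonneg_nonneg nonneg)

lemma survival_Suc: "survival K B (Suc k) x = (\<Sum>z\<in>B. K x z * survival K B k z)"
proof -
  have "survival K B (Suc k) x = (\<Sum>y\<in>B. \<Sum>z\<in>B. K x z * killed_trans K B k z y)"
    unfolding survival_def by simp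
  also have "\<dots> = (\<Sum>z\<in>B. \<Sum>y\<in>B. K x z * killed_trans K B k z y)"
    by (rule sum.swap)
  finally show ?thesis unfolding survival_def by (simp add: sum_distrib_left)
qed

lemma survival_le_1: "survival K B k x \<le> 1"
proof (induction k arbitrary: x)
  case 0
  then show ?case by (simp add: survival_def)
next
  case (Suc k)
  have "survival K B (Suc k) x \<le> (\<Sum>z\<in>B. K x z)"
    unfolding survival_Suc by (rule sum_mono) (simp add: nonneg Suc mult_left_le)
  then show ?case using row_sum_on_le[of x B] by linarith
qed

lemma weighted_survival_le: "(\<Sum>z\<in>C. K x z * survival K B k z) \<le> (\<Sum>z\<in>C. K x z)"
  by (rule sum_mono) (simp add: nonneg survival_le_1 mult_left_le)

lemma survival_le_exit_path:
  assumes "0 < c" "c \<le> 1" "successively (\<lambda>x y. c \<le> K x y) (z # ys)"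
    and "\<exists>y\<in>set ys. y \<notin> B" "length ys \<le> k"
  shows "survival K B k z \<le> 1 - c ^ length ys"
  using assms(3-5)
proof (induction ys arbitrary: z k)
  case Nil
  then show ?case by simp
next
  case (Cons y ys)
  obtain k' where k: "k = Suc k'" using Cons.prems(3) by (cases k) auto
  have cy: "c \<le> K z y" and path: "successively (\<lambda>x y. c \<le> K x y) (y # ys)"
    using Cons.prems(1) by auto
  have cpow: "0 \<le> c ^ length ys" "c ^ length ys \<le> 1"
    using assms(1,2) by (auto intro: power_le_one)
  show ?case
  proof (cases "y \<in> B")
    case False
    have "(\<Sum>z'\<in>insert y B. K z z') \<le> 1" by (rule row_sum_on_le)
    then have "(\<Sum>z'\<in>B. K z z') \<le> 1 - K z y" using False by simp
    moreover have "c * c ^ length ys \<le> c" using cpow assms(1) by (simp add: mult_left_le)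
    ultimately show ?thesis using weighted_survival_le[of z B k' B] cy k
      by (simp add: survival_Suc)
  next
    case True
    then have IH: "survival K B k' y \<le> 1 - c ^ length ys"
      using Cons.IH[OF path] Cons.prems(2,3) k by simp
    have "survival K B k z = K z y * survival K B k' y + (\<Sum>z'\<in>B-{y}. K z z' * survival K B k' z')"
      using k True by (simp add: survival_Suc sum.remove)
    also have "\<dots> \<le> K z y * (1 - c ^ length ys) + (\<Sum>z'\<in>B-{y}. K z z')"
      by (intro add_mono mult_left_mono[OF IH nonneg] weighted_survival_le)
    also have "\<dots> = (\<Sum>z'\<in>B. K z z') - K z y * c ^ length ys"
      using True by (simp add: sum.remove right_diff_distrib)
    also have "\<dots> \<le> 1 - c * c ^ length ys"
      using row_sum_on_le[of z B] mult_right_mono[OF cy cpow(1)] by linarith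
    finally show ?thesis by simp
  qed
qed

lemma killed_step_power:
  "y \<in> B \<Longrightarrow> (killed_step K B ^^ k) v y = (\<Sum>x\<in>B. v x * killed_trans K B k x y)"
proof (induction k arbitrary: v)
  case 0
  then show ?case by (simp add: if_distrib cong: if_cong)
next
  case (Suc k)
  have "(killed_step K B ^^ Suc k) v y = (\<Sum>x\<in>B. killed_step K B v x * killed_trans K B k x y)"
    using Suc by (simp only: funpow_Suc_right comp_apply)
  also have "\<dots> = (\<Sum>z\<in>B. \<Sum>x\<in>B. v z * K z x * killed_trans K B k x y)"
    by (simp add: killed_step_def sum_distrib_right) (rule sum.swap)
  also have "\<dots> = (\<Sum>z\<in>B. v z * killed_trans K B (Suc k) z y)"
    by (simp add: sum_distrib_left mult.assoc)
  finally show ?case .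
qed

lemma l1_norm_killed_step_power:
  "l1_norm_on B ((killed_step K B ^^ k) v) \<le> (\<Sum>x\<in>B. \<bar>v x\<bar> * survival K B k x)"
proof -
  have "l1_norm_on B ((killed_step K B ^^ k) v) = (\<Sum>y\<in>B. \<bar>\<Sum>x\<in>B. v x * killed_trans K B k x y\<bar>)"
    unfolding l1_norm_on_def by (rule sum.cong) (auto simp: killed_step_power)
  also have "\<dots> \<le> (\<Sum>y\<in>B. \<Sum>x\<in>B. \<bar>v x\<bar> * killed_trans K B k x y)"
    by (intro sum_mono order_trans[OF sum_abs]) (simp add: abs_mult killed_trans_nonneg)
  also have "\<dots> = (\<Sum>x\<in>B. \<bar>v x\<bar> * survival K B k x)"
    by (subst sum.swap) (simp add: survival_def sum_distrib_left)
  finally show ?thesis .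
qed

lemma l1_norm_killed_step_power_le: "l1_norm_on B ((killed_step K B ^^ k) v) \<le> l1_norm_on B v"
proof -
  have "(\<Sum>x\<in>B. \<bar>v x\<bar> * survival K B k x) \<le> l1_norm_on B v"
    unfolding l1_norm_on_def by (rule sum_mono) (simp add: survival_le_1 mult_left_le)
  then show ?thesis using l1_norm_killed_step_power[of B k v] by linarith
qed

text \<open>The inverse of \<open>I - L\<close> on \<open>B\<close>, \<open>L = killed_step K B\<close>, has \<open>l\<^sub>1\<close>-norm at most \<open>M / \<delta>\<close>, by the
  telescoping identity \<open>e = (\<Sum>j<M. L^j (e - L e)) + L^M e\<close>.\<close>
lemma l1_norm_le_residual:
  assumes "uniformly_escapes K B M \<delta>"
  shows "\<delta> * l1_norm_on B e \<le> real M * l1_norm_on B (\<lambda>y. e y - killed_step K B e y)"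
proof -
  let ?L = "killed_step K B"
  define d where "d = (\<lambda>y. e y - ?L e y)"
  have step: "(?L ^^ k) e y = (?L ^^ k) d y + (?L ^^ Suc k) e y" for k y
  proof -
    have "(?L ^^ k) e = (?L ^^ k) (\<lambda>y. d y + ?L e y)"
      by (simp add: d_def)
    then show ?thesis by (simp only: killed_step_power_add funpow_Suc_right comp_def)
  qed
  have telescope: "e y = (\<Sum>j<k. (?L ^^ j) d y) + (?L ^^ k) e y" for k y
    by (induction k) (simp_all add: step)
  have "l1_norm_on B e \<le> (\<Sum>j<M. l1_norm_on B ((?L ^^ j) d)) + l1_norm_on B ((?L ^^ M) e)"
  proof -
    have "l1_norm_on B e = (\<Sum>y\<in>B. \<bar>(\<Sum>j<M. (?L ^^ j) d y) + (?L ^^ M) e y\<bar>)"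
      unfolding l1_norm_on_def by (simp only: telescope[of _ M, symmetric])
    also have "\<dots> \<le> (\<Sum>y\<in>B. (\<Sum>j<M. \<bar>(?L ^^ j) d y\<bar>) + \<bar>(?L ^^ M) e y\<bar>)"
      by (intro sum_mono order_trans[OF abs_triangle_ineq] add_mono sum_abs) auto
    also have "\<dots> = (\<Sum>j<M. l1_norm_on B ((?L ^^ j) d)) + l1_norm_on B ((?L ^^ M) e)"
      unfolding l1_norm_on_def by (simp add: sum.distrib) (rule sum.swap)
    finally show ?thesis .
  qed
  also have "\<dots> \<le> real M * l1_norm_on B d + (1 - \<delta>) * l1_norm_on B e"
  proof (rule add_mono)
    show "(\<Sum>j<M. l1_norm_on B ((?L ^^ j) d)) \<le> real M * l1_norm_on B d"
      using sum_mono[of "{..<M}" "\<lambda>j. l1_norm_on B ((?L ^^ j) d)" "\<lambda>_. l1_norm_on B d"]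
      by (simp add: l1_norm_killed_step_power_le)
    have "(\<Sum>x\<in>B. \<bar>e x\<bar> * survival K B M x) \<le> (\<Sum>x\<in>B. \<bar>e x\<bar> * (1 - \<delta>))"
      using assms by (intro sum_mono mult_left_mono) (auto simp: uniformly_escapes_def)
    then show "l1_norm_on B ((?L ^^ M) e) \<le> (1 - \<delta>) * l1_norm_on B e"
      using l1_norm_killed_step_power[of B M e]
      by (simp add: l1_norm_on_def sum_distrib_left mult.commute)
  qed
  finally show ?thesis by (simp add: d_def algebra_simps)
qed

lemma killed_fixed_point_eq_0:
  assumes escapes: "uniformly_escapes K B M \<delta>"
    and fixed: "\<forall>y\<in>B. e y = killed_step K B e y"
  shows "\<forall>y\<in>B. e y = 0"
proof -
  have "l1_norm_on B (\<lambda>y. e y - killed_step K B e y) = 0"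
    unfolding l1_norm_on_def using fixed by simp
  then have "\<delta> * l1_norm_on B e \<le> 0" using l1_norm_le_residual[OF escapes, of e] by simp
  then have "l1_norm_on B e = 0"
    using escapes l1_norm_on_nonneg[of B e] by (simp add: uniformly_escapes_def mult_le_0_iff)
  then show ?thesis unfolding l1_norm_on_def by (simp add: sum_nonneg_eq_0_iff)
qed

lemma l1_norm_solution_diff_le:
  assumes "uniformly_escapes K B M \<delta>" and "\<forall>y\<in>B. v y = f y + killed_step K B v y"
  shows "\<delta> * l1_norm_on B (\<lambda>y. v y - t y)
    \<le> real M * l1_norm_on B (\<lambda>y. f y + killed_step K B t y - t y)"
proof -
  have "l1_norm_on B (\<lambda>y. (v y - t y) - killed_step K B (\<lambda>x. v x - t x) y)
      = l1_norm_on B (\<lambda>y. f y + killed_step K B t y - t y)"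
    unfolding l1_norm_on_def using assms(2) killed_step_diff[of K B 1 v 1 t]
    by (intro sum.cong refl) (simp add: abs_minus_commute)
  then show ?thesis using l1_norm_le_residual[OF assms(1), of "\<lambda>y. v y - t y"] by simp
qed

lemma killed_equation_solvable:
  assumes "uniformly_escapes K B M \<delta>"
  shows "\<exists>e. \<forall>y\<in>B. e y = d y + killed_step K B e y"
proof -
  define F :: "real^'s \<Rightarrow> real^'s" where
    "F = (\<lambda>v. \<chi> y. if y \<in> B then v$y - killed_step K B (($) v) y else v$y)"
  have lin: "linear F"
    by (rule linearI)
      (simp_all add: F_def vec_eq_iff killed_step_def sum.distrib sum_distrib_left algebra_simps)
  have "inj F"
  proof (subst linear_injective_0[OF lin], intro allI impI)
    fix v assume F0: "F v = 0"
    have "\<forall>y\<in>B. v$y = killed_step K B (($) v) y"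
      using F0 by (simp add: F_def vec_eq_iff) (metis eq_iff_diff_eq_0)
    then have "\<forall>y\<in>B. v$y = 0" by (rule killed_fixed_point_eq_0[OF assms])
    moreover have "v$y = 0" if "y \<notin> B" for y
      using arg_cong[OF F0, of "\<lambda>w. w $ y"] that by (simp add: F_def)
    ultimately show "v = 0" by (auto simp: vec_eq_iff)
  qed
  then obtain v where "F v = (\<chi> y. d y)"
    using linear_inj_imp_surj[OF lin] by (metis surjE)
  then have "\<forall>y\<in>B. v$y = d y + killed_step K B (($) v) y"
    by (simp add: F_def vec_eq_iff) (metis diff_add_cancel add.commute)
  then show ?thesis by blast
qed

text \<open>A maximum principle: the negative part \<open>n\<close> of a solution with nonnegative data is
  subinvariant, \<open>n \<le> killed_step K B n\<close> on \<open>B\<close>, while mass can only decrease under the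
  kernel; hence \<open>n\<close> is invariant and therefore zero.\<close>
lemma killed_equation_solution_nonneg:
  assumes escapes: "uniformly_escapes K B M \<delta>"
    and solution: "\<forall>y\<in>B. e y = d y + killed_step K B e y" and d_nonneg: "\<forall>y\<in>B. 0 \<le> d y"
  shows "\<forall>y\<in>B. 0 \<le> e y"
proof -
  define n where "n = (\<lambda>x. max (- e x) 0)"
  have n_nonneg: "0 \<le> n x" for x by (simp add: n_def)
  have sub: "n y \<le> killed_step K B n y" if "y \<in> B" for y
  proof -
    have "- e y \<le> - killed_step K B e y"
      using solution d_nonneg that by force
    also have "\<dots> = (\<Sum>x\<in>B. (- e x) * K x y)"
      by (simp add: killed_step_def sum_negf)
    also have "\<dots> \<le> killed_step K B n y"
      unfolding killed_step_def n_def by (intro sum_mono mult_right_mono) (auto simp: nonneg)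
    finally show ?thesis
      using killed_step_nonneg[of B n y] n_nonneg by (simp add: n_def)
  qed
  have "(\<Sum>y\<in>B. killed_step K B n y) = (\<Sum>x\<in>B. n x * (\<Sum>y\<in>B. K x y))"
    unfolding killed_step_def by (subst sum.swap) (simp add: sum_distrib_left)
  also have "\<dots> \<le> (\<Sum>x\<in>B. n x)"
    by (rule sum_mono) (simp add: row_sum_on_le mult_left_le n_nonneg)
  finally have "(\<Sum>y\<in>B. killed_step K B n y - n y) \<le> 0" by (simp add: sum_subtractf)
  moreover have "0 \<le> (\<Sum>y\<in>B. killed_step K B n y - n y)"
    using sub by (intro sum_nonneg) simp
  ultimately have "\<forall>y\<in>B. killed_step K B n y - n y = 0"
    using sum_nonneg_eq_0_iff[of B "\<lambda>y. killed_step K B n y - n y"] sub by simp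
  then have "\<forall>y\<in>B. n y = 0"
    by (intro killed_fixed_point_eq_0[OF escapes]) simp
  then show ?thesis by (auto simp: n_def)
qed

end

definition stationary_dist :: "('s::finite \<Rightarrow> 's \<Rightarrow> real) \<Rightarrow> ('s \<Rightarrow> real) \<Rightarrow> bool" where
  "stationary_dist K \<pi> \<longleftrightarrow>
     (\<forall>x. 0 \<le> \<pi> x) \<and> (\<Sum>x\<in>UNIV. \<pi> x) = 1 \<and> (\<forall>y. (\<Sum>x\<in>UNIV. \<pi> x * K x y) = \<pi> y)"

lemma sum_remove_state: "(\<Sum>y\<in>UNIV. f y) = f s + (\<Sum>y\<in>-{s}. f y)" for f :: "'s::finite \<Rightarrow> real"
  using sum.remove[of UNIV s f] by (simp add: Compl_eq_Diff_UNIV)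

lemma stationary_dist_le_1: "stationary_dist K \<pi> \<Longrightarrow> \<pi> x \<le> 1"
  unfolding stationary_dist_def using member_le_sum[of x UNIV \<pi>] by auto

locale stochastic_kernel = substochastic_kernel +
  assumes row_sum: "(\<Sum>y\<in>UNIV. K x y) = 1"
begin

lemma balance_at_remaining_state:
  assumes "(\<Sum>x\<in>UNIV. \<pi> x) = 1" and "\<forall>y\<in>-{s}. (\<Sum>x\<in>UNIV. \<pi> x * K x y) = \<pi> y"
  shows "(\<Sum>x\<in>UNIV. \<pi> x * K x s) = \<pi> s"
proof -
  have "(\<Sum>y\<in>UNIV. \<Sum>x\<in>UNIV. \<pi> x * K x y) = (\<Sum>x\<in>UNIV. \<pi> x * (\<Sum>y\<in>UNIV. K x y))"
    by (subst sum.swap) (simp add: sum_distrib_left)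
  then have "(\<Sum>y\<in>UNIV. \<Sum>x\<in>UNIV. \<pi> x * K x y) = (\<Sum>y\<in>UNIV. \<pi> y)"
    using assms(1) by (simp add: row_sum)
  then show ?thesis using assms(2) by (simp add: sum_remove_state[of _ s])
qed

lemma stationary_dist_killed:
  assumes "stationary_dist K \<pi>" "y \<in> -{s}"
  shows "\<pi> y = \<pi> s * K s y + killed_step K (-{s}) \<pi> y"
  using assms unfolding stationary_dist_def killed_step_def by (metis sum_remove_state)

lemma stationary_dist_exists:
  assumes "uniformly_escapes K (-{s}) M \<delta>"
  shows "\<exists>\<pi>. stationary_dist K \<pi>"
proof -
  obtain v where v: "\<forall>y\<in>-{s}. v y = K s y + killed_step K (-{s}) v y"
    using killed_equation_solvable[OF assms] by blast
  have v_nonneg: "\<forall>y\<in>-{s}. 0 \<le> v y"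
    by (rule killed_equation_solution_nonneg[OF assms v]) (simp add: nonneg)
  define Z where "Z = 1 + (\<Sum>y\<in>-{s}. v y)"
  have "0 \<le> (\<Sum>y\<in>-{s}. v y)" using v_nonneg by (intro sum_nonneg) auto
  then have "0 < Z" by (simp add: Z_def)
  define \<pi> where "\<pi> = (\<lambda>y. (if y = s then 1 else v y) / Z)"
  have sum_1: "(\<Sum>x\<in>UNIV. \<pi> x) = 1"
    using \<open>0 < Z\<close>
    by (simp add: sum_remove_state[of _ s] \<pi>_def Z_def sum_divide_distrib[symmetric] add_divide_distrib[symmetric])
  have balance: "\<forall>y\<in>-{s}. (\<Sum>x\<in>UNIV. \<pi> x * K x y) = \<pi> y"
  proof
    fix y assume y: "y \<in> -{s}"
    have "(\<Sum>x\<in>-{s}. \<pi> x * K x y) = killed_step K (-{s}) v y / Z"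
      unfolding killed_step_def \<pi>_def by (simp add: sum_divide_distrib)
    then have "(\<Sum>x\<in>UNIV. \<pi> x * K x y) = (K s y + killed_step K (-{s}) v y) / Z"
      by (simp add: sum_remove_state[of _ s] \<pi>_def add_divide_distrib)
    also have "\<dots> = \<pi> y" using v y by (simp add: \<pi>_def)
    finally show "(\<Sum>x\<in>UNIV. \<pi> x * K x y) = \<pi> y" .
  qed
  have "stationary_dist K \<pi>"
    unfolding stationary_dist_def
    using v_nonneg \<open>0 < Z\<close> sum_1 balance balance_at_remaining_state[OF sum_1 balance]
    by (auto simp: \<pi>_def)
  then show ?thesis by blast
qed

text \<open>Two stationary distributions \<open>\<pi>\<close>, \<open>\<pi>'\<close> give the invariant vector
  \<open>\<pi> s * \<pi>' - \<pi>' s * \<pi>\<close> of the killed kernel, which must vanish.\<close>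
lemma stationary_dist_unique:
  assumes escapes: "uniformly_escapes K (-{s}) M \<delta>"
    and st: "stationary_dist K \<pi>" and st': "stationary_dist K \<pi>'"
  shows "\<pi>' = \<pi>"
proof -
  have sums: "(\<Sum>x\<in>UNIV. \<pi> x) = 1" "(\<Sum>x\<in>UNIV. \<pi>' x) = 1"
    using st st' by (auto simp: stationary_dist_def)
  have "0 < \<pi> s"
  proof (rule ccontr)
    assume "\<not> 0 < \<pi> s"
    with st have "\<pi> s = 0" by (auto simp: stationary_dist_def intro: antisym)
    then have "\<forall>y\<in>-{s}. \<pi> y = 0"
      by (intro killed_fixed_point_eq_0[OF escapes]) (simp add: stationary_dist_killed[OF st])
    then show False using sums \<open>\<pi> s = 0\<close> by (simp add: sum_remove_state[of _ s])
  qed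
  define e where "e = (\<lambda>y. \<pi> s * \<pi>' y - \<pi>' s * \<pi> y)"
  have "\<forall>y\<in>-{s}. e y = 0"
  proof (rule killed_fixed_point_eq_0[OF escapes], intro ballI)
    fix y assume "y \<in> -{s}"
    then show "e y = killed_step K (-{s}) e y"
      unfolding e_def killed_step_diff
      using stationary_dist_killed[OF st] stationary_dist_killed[OF st'] by (simp add: algebra_simps)
  qed
  then have proportional: "\<pi> s * \<pi>' y = \<pi>' s * \<pi> y" for y
    by (cases "y = s") (auto simp: e_def)
  then have "\<pi> s * (\<Sum>y\<in>UNIV. \<pi>' y) = \<pi>' s * (\<Sum>y\<in>UNIV. \<pi> y)"
    by (simp add: sum_distrib_left)
  then have "\<pi>' s = \<pi> s" using sums by simp
  then show ?thesis using proportional \<open>0 < \<pi> s\<close> by (auto simp: fun_eq_iff)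
qed

lemma ex1_stationary_dist:
  assumes "uniformly_escapes K (-{s}) M \<delta>"
  shows "\<exists>!\<pi>. stationary_dist K \<pi>"
  using stationary_dist_exists[OF assms] stationary_dist_unique[OF assms] by blast

end

section \<open>The evolutionary Markov chain\<close>

lemma complement_state_involutive [simp]: "complement_state (complement_state x) = x"
  by (simp add: complement_state_def)

lemma complement_state_monomorphic [simp]:
  "complement_state all_zero = all_one" "complement_state all_one = all_zero"
  by (auto simp: complement_state_def all_zero_def all_one_def)

lemma complement_state_eq_iff [simp]: "complement_state x = complement_state y \<longleftrightarrow> x = y"
  by (metis complement_state_involutive)

lemma replacement_rule_nonneg: "replacement_rule p \<Longrightarrow> 0 \<le> p e"
  unfolding replacement_rule_def by (cases e) auto

lemma replacement_rule_sum: "replacement_rule p \<Longrightarrow> (\<Sum>e\<in>UNIV. p e) = 1"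
  unfolding replacement_rule_def by auto

lemma replacement_rule_le_1: "replacement_rule p \<Longrightarrow> p e \<le> 1"
  using member_le_sum[of e UNIV p] replacement_rule_sum[of p] replacement_rule_nonneg[of p] by auto

lemma site_prob_nonneg:
  "0 \<le> u \<Longrightarrow> u \<le> 1 \<Longrightarrow> 0 \<le> \<nu> \<Longrightarrow> \<nu> \<le> 1 \<Longrightarrow> 0 \<le> site_prob u \<nu> x \<alpha> g b"
  unfolding site_prob_def by (auto intro!: add_nonneg_nonneg mult_nonneg_nonneg)

lemma sum_states_prod:
  fixes f :: "'g::finite \<Rightarrow> bool \<Rightarrow> real"
  shows "(\<Sum>y\<in>UNIV. \<Prod>g\<in>UNIV. f g (y g)) = (\<Prod>g\<in>UNIV. f g True + f g False)"
proof -
  have "(\<Prod>g\<in>UNIV. f g True + f g False) = (\<Prod>g\<in>UNIV. \<Sum>b\<in>UNIV. f g b)"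
    by (simp add: UNIV_bool add.commute)
  also have "\<dots> = (\<Sum>y\<in>PiE UNIV (\<lambda>_. UNIV). \<Prod>g\<in>UNIV. f g (y g))"
    by (rule prod_sum_PiE) auto
  finally show ?thesis by (simp add: PiE_UNIV_domain)
qed

lemma trans_prob_row_sum:
  assumes "replacement_rule p"
  shows "(\<Sum>y\<in>UNIV. trans_prob p u \<nu> x y) = 1"
proof -
  have "(\<Sum>y\<in>UNIV. \<Prod>g\<in>UNIV. if g \<in> fst e then site_prob u \<nu> x (snd e) g (y g)
                    else (if y g = x g then 1 else 0)) = 1" for e :: "'a event"
    by (subst sum_states_prod) (auto intro!: prod.neutral simp: site_prob_def algebra_simps)
  then have "(\<Sum>y\<in>UNIV. trans_prob p u \<nu> x y) = (\<Sum>e\<in>UNIV. p e)"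
    unfolding trans_prob_def by (subst sum.swap) (simp add: sum_distrib_left[symmetric])
  then show ?thesis using replacement_rule_sum[OF assms] by simp
qed

lemma stochastic_kernel_trans_prob:
  assumes "replacement_rule p" "0 \<le> u" "u \<le> 1" "0 \<le> \<nu>" "\<nu> \<le> 1"
  shows "stochastic_kernel (trans_prob p u \<nu>)"
proof unfold_locales
  show "0 \<le> trans_prob p u \<nu> x y" for x y
    unfolding trans_prob_def using assms
    by (auto intro!: sum_nonneg mult_nonneg_nonneg prod_nonneg replacement_rule_nonneg[OF assms(1)]
        site_prob_nonneg)
qed (simp_all add: trans_prob_row_sum[OF assms(1)])

lemma trans_prob_complement:
  "trans_prob p u \<nu> (complement_state x) (complement_state y) = trans_prob p u (1 - \<nu>) x y"
  unfolding trans_prob_def complement_state_def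
  by (intro sum.cong refl arg_cong2[where f="(*)"] prod.cong) (auto simp: site_prob_def)

lemma site_prob_no_mutation_bias: "site_prob 0 \<nu> = site_prob 0 \<nu>'"
  by (simp add: fun_eq_iff site_prob_def)

lemma trans_prob_no_mutation_bias: "trans_prob p 0 \<nu> = trans_prob p 0 \<nu>'"
  unfolding trans_prob_def site_prob_no_mutation_bias[of \<nu> \<nu>'] ..

lemma trans_prob_no_mutation_complement:
  "trans_prob p 0 \<nu> (complement_state x) (complement_state y) = trans_prob p 0 \<nu> x y"
  by (metis trans_prob_complement trans_prob_no_mutation_bias)

lemma trans_prob_ge_event:
  assumes "replacement_rule p" "0 \<le> u" "u \<le> 1" "0 \<le> \<nu>" "\<nu> \<le> 1"
    and "c \<le> (\<Prod>g\<in>UNIV. if g \<in> fst e then site_prob u \<nu> x (snd e) g (y g)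
                    else (if y g = x g then 1 else 0))"
  shows "p e * c \<le> trans_prob p u \<nu> x y"
proof -
  let ?t = "\<lambda>e. p e * (\<Prod>g\<in>UNIV. if g \<in> fst e then site_prob u \<nu> x (snd e) g (y g)
                    else (if y g = x g then 1 else 0))"
  have "p e * c \<le> ?t e"
    using assms by (intro mult_left_mono replacement_rule_nonneg[OF assms(1)])
  also have "?t e \<le> (\<Sum>e\<in>UNIV. ?t e)"
    using assms by (intro member_le_sum)
      (auto intro!: mult_nonneg_nonneg prod_nonneg replacement_rule_nonneg[OF assms(1)] site_prob_nonneg)
  finally show ?thesis unfolding trans_prob_def .
qed

lemma trans_prob_replacement_ge:
  assumes "replacement_rule p" "0 \<le> u" "u \<le> 1" "0 \<le> \<nu>" "\<nu> \<le> 1"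
  shows "p e * (1 - u) ^ CARD('g::finite) \<le> trans_prob p u \<nu> (z :: 'g state) (z \<circ> extend_event e)"
proof (rule trans_prob_ge_event[OF assms])
  have "(1 - u) ^ CARD('g) = (\<Prod>g\<in>(UNIV :: 'g set). 1 - u)" by simp
  also have "\<dots> \<le> (\<Prod>g\<in>UNIV. if g \<in> fst e then site_prob u \<nu> z (snd e) g ((z \<circ> extend_event e) g)
      else (if (z \<circ> extend_event e) g = z g then 1 else 0))"
    by (rule prod_mono) (use assms in \<open>auto simp: site_prob_def extend_event_def\<close>)
  finally show "(1 - u) ^ CARD('g) \<le> \<dots>" .
qed

lemma trans_prob_mutation_to_zero_ge:
  assumes "replacement_rule p" "0 \<le> u" "u \<le> 1" "0 \<le> \<nu>" "\<nu> \<le> 1"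
  shows "p e * (u * (1 - \<nu>)) ^ CARD('g::finite) \<le> trans_prob p u \<nu> (z :: 'g state) (\<lambda>h. h \<notin> fst e \<and> z h)"
proof (rule trans_prob_ge_event[OF assms])
  have "(u * (1 - \<nu>)) ^ CARD('g) = (\<Prod>g\<in>(UNIV :: 'g set). u * (1 - \<nu>))" by simp
  also have "\<dots> \<le> (\<Prod>g\<in>UNIV. if g \<in> fst e then site_prob u \<nu> z (snd e) g (g \<notin> fst e \<and> z g)
      else (if (g \<notin> fst e \<and> z g) = z g then 1 else 0))"
    by (rule prod_mono) (use assms in \<open>auto simp: site_prob_def intro: mult_le_one\<close>)
  finally show "(u * (1 - \<nu>)) ^ CARD('g) \<le> \<dots>" .
qed

lemma isCont_trans_prob: "isCont (\<lambda>u. trans_prob p u \<nu> x y) u\<^sub>0"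
  unfolding trans_prob_def site_prob_def
  apply (intro continuous_intros)
  subgoal for e g
    by (cases "g \<in> fst e"; cases "y g = x (snd e g)"; cases "y g"; cases "y g = x g")
      (simp_all add: continuous_intros)
  done

lemma trans_prob_tendsto_no_mutation:
  "((\<lambda>u. trans_prob p u \<nu> x y) \<longlongrightarrow> trans_prob p 0 \<nu> x y) (at_right 0)"
proof -
  have "isCont (\<lambda>u. trans_prob p u \<nu> x y) 0" by (rule isCont_trans_prob)
  then show ?thesis by (simp add: isCont_def filterlim_at_split)
qed

definition single_mutant_rate :: "('g::finite event \<Rightarrow> real) \<Rightarrow> 'g state \<Rightarrow> real" where
  "single_mutant_rate p y = (if card {g. y g} = 1 then (\<Sum>e | {g. y g} \<subseteq> fst e. p e) else 0)"

lemma single_mutant_rate_nonneg: "replacement_rule p \<Longrightarrow> 0 \<le> single_mutant_rate p y"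
  unfolding single_mutant_rate_def by (auto intro: sum_nonneg replacement_rule_nonneg)

lemma single_mutant_rate_all_one:
  "2 \<le> CARD('g::finite) \<Longrightarrow> single_mutant_rate p (all_one :: 'g state) = 0"
  by (simp add: single_mutant_rate_def all_one_def)

lemma replacement_from_all_zero:
  fixes y :: "'g::finite state"
  assumes "y \<noteq> all_zero"
  shows "(\<Prod>g\<in>UNIV. if g \<in> R then site_prob u \<nu> all_zero \<alpha> g (y g) else (if y g = all_zero g then 1 else 0))
    = u * (of_bool ({g. y g} \<subseteq> R) * \<nu> * (u * \<nu>) ^ (card {g. y g} - 1) * (1 - u * \<nu>) ^ card (R - {g. y g}))"
    (is "?lhs = _")
proof -
  let ?Y = "{g. y g}"
  have "card ?Y \<noteq> 0" using assms by (auto simp: all_zero_def card_eq_0_iff)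
  then have power_Y: "(u * \<nu>) ^ card ?Y = u * (\<nu> * (u * \<nu>) ^ (card ?Y - 1))"
    by (cases "card ?Y") auto
  have "?lhs = (\<Prod>g\<in>UNIV. if y g then (if g \<in> R then u * \<nu> else 0) else (if g \<in> R then 1 - u * \<nu> else 1))"
    by (rule prod.cong) (auto simp: site_prob_def all_zero_def algebra_simps)
  also have "\<dots> = (\<Prod>g\<in>?Y. if g \<in> R then u * \<nu> else 0) * (\<Prod>g\<in>-?Y. if g \<in> R then 1 - u * \<nu> else 1)"
    by (simp add: prod.If_cases Compl_eq)
  also have "(\<Prod>g\<in>?Y. if g \<in> R then u * \<nu> else 0) = of_bool (?Y \<subseteq> R) * (u * \<nu>) ^ card ?Y"
  proof (cases "?Y \<subseteq> R")
    case True
    then show ?thesis by (simp add: subset_iff)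
  next
    case False
    then show ?thesis by (auto intro: prod_zero)
  qed
  also have "(\<Prod>g\<in>-?Y. if g \<in> R then 1 - u * \<nu> else 1) = (1 - u * \<nu>) ^ card (R - ?Y)"
    by (simp add: prod.If_cases Diff_eq Int_commute)
  finally show ?thesis by (simp add: power_Y)
qed

lemma trans_prob_from_all_zero_tendsto:
  assumes "y \<noteq> all_zero"
  shows "((\<lambda>u. trans_prob p u \<nu> all_zero y / u) \<longlongrightarrow> \<nu> * single_mutant_rate p y) (at_right 0)"
proof -
  let ?Y = "{g. y g}"
  define G where "G u = (\<Sum>e\<in>UNIV. p e * (of_bool (?Y \<subseteq> fst e)
    * \<nu> * (u * \<nu>) ^ (card ?Y - 1) * (1 - u * \<nu>) ^ card (fst e - ?Y)))" for u
  have "card ?Y \<noteq> 0" using assms by (auto simp: all_zero_def card_eq_0_iff)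
  then have "card ?Y - 1 = 0 \<longleftrightarrow> card ?Y = 1" by linarith
  then have "G 0 = (\<Sum>e\<in>UNIV. if ?Y \<subseteq> fst e \<and> card ?Y = 1 then \<nu> * p e else 0)"
    unfolding G_def by (intro sum.cong) (auto simp: power_0_left)
  also have "\<dots> = \<nu> * single_mutant_rate p y"
    by (simp add: single_mutant_rate_def sum.inter_filter[symmetric] sum_distrib_left)
  finally have "G 0 = \<nu> * single_mutant_rate p y" .
  moreover have "isCont G 0" unfolding G_def by (intro continuous_intros)
  ultimately have "(G \<longlongrightarrow> \<nu> * single_mutant_rate p y) (at_right 0)"
    by (simp add: isCont_def filterlim_at_split)
  moreover have "\<forall>\<^sub>F u in at_right 0. G u = trans_prob p u \<nu> all_zero y / u"
    using eventually_at_right_less[of 0]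
    by eventually_elim
      (simp add: G_def trans_prob_def replacement_from_all_zero[OF assms] mult.left_commute
        sum_distrib_left[symmetric])
  ultimately show ?thesis by (rule Lim_transform_eventually)
qed

lemma trans_prob_from_all_one_tendsto:
  assumes "y \<noteq> all_one"
  shows "((\<lambda>u. trans_prob p u \<nu> all_one y / u) \<longlongrightarrow> (1 - \<nu>) * single_mutant_rate p (complement_state y))
    (at_right 0)"
proof -
  have "complement_state y \<noteq> all_zero"
    using assms complement_state_eq_iff[of y all_one] by auto
  from trans_prob_from_all_zero_tendsto[OF this, of p "1 - \<nu>"] show ?thesis
    using trans_prob_complement[of p _ \<nu> all_zero "complement_state y"] by simp
qed

section \<open>Neutral drift with a fixation sequence\<close>

definition polymorphic_states :: "'g state set" where
  "polymorphic_states = - {all_zero, all_one}"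

lemma all_zero_ne_all_one: "all_zero \<noteq> all_one"
  by (simp add: all_zero_def all_one_def fun_eq_iff)

lemma complement_state_polymorphic:
  "x \<in> polymorphic_states \<Longrightarrow> complement_state x \<in> polymorphic_states"
  unfolding polymorphic_states_def
  using complement_state_eq_iff[of x all_zero] complement_state_eq_iff[of x all_one] by simp

lemma sum_polymorphic_complement:
  "(\<Sum>x\<in>polymorphic_states. f (complement_state x)) = (\<Sum>x\<in>polymorphic_states. f x)"
proof (rule sum.reindex_bij_witness[of _ complement_state complement_state])
qed (auto simp: complement_state_polymorphic)

lemma sum_states_split:
  "(\<Sum>y\<in>UNIV. f y) = f all_zero + f all_one + (\<Sum>y\<in>polymorphic_states. f y)"
  for f :: "'g::finite state \<Rightarrow> real"
proof -
  have split: "-{all_zero} = insert all_one polymorphic_states"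
    using all_zero_ne_all_one by (auto simp: polymorphic_states_def)
  have "(\<Sum>y\<in>UNIV. f y) = f all_zero + (\<Sum>y\<in>insert all_one polymorphic_states. f y)"
    unfolding split[symmetric] by (rule sum_remove_state)
  then show ?thesis by (simp add: polymorphic_states_def add.assoc)
qed

fun replacement_path :: "'g state \<Rightarrow> 'g event list \<Rightarrow> 'g state list" where
  "replacement_path z [] = []"
| "replacement_path z (e # es) = (z \<circ> extend_event e) # replacement_path (z \<circ> extend_event e) es"

lemma length_replacement_path [simp]: "length (replacement_path z es) = length es"
  by (induction es arbitrary: z) auto

lemma last_replacement_path:
  "es \<noteq> [] \<Longrightarrow> last (replacement_path z es) = z \<circ> foldr (\<circ>) (map extend_event es) id"
proof (induction es arbitrary: z)
  case (Cons e es)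
  show ?case
  proof (cases "es = []")
    case False
    then have "last (replacement_path z (e # es)) = last (replacement_path (z \<circ> extend_event e) es)"
      by (cases es) auto
    with Cons.IH[OF False] show ?thesis by (simp add: comp_assoc)
  qed simp
qed simp

lemma successively_replacement_path:
  "(\<And>e w. e \<in> set es \<Longrightarrow> c \<le> K w (w \<circ> extend_event e))
    \<Longrightarrow> successively (\<lambda>x y. c \<le> K x y) (z # replacement_path z es)"
  by (induction es arbitrary: z) auto

lemma is_stationary_eq: "is_stationary p u \<nu> = stationary_dist (trans_prob p u \<nu>)"
  by (simp add: fun_eq_iff is_stationary_def stationary_dist_def)

locale neutral_drift =
  fixes p :: "'g::finite event \<Rightarrow> real" and \<nu> :: real and g :: 'g and es :: "'g event list"
  assumes replacement_rule: "replacement_rule p"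
    and bias_pos: "0 < \<nu>" and bias_less_1: "\<nu> < 1"
    and events_nonempty: "es \<noteq> []"
    and events_pos: "\<forall>e\<in>set es. 0 < p e"
    and events_fix: "\<forall>h. foldr (\<circ>) (map extend_event es) id h = g"
    and events_replace: "\<exists>e\<in>set es. g \<in> fst e"
begin

abbreviation K :: "real \<Rightarrow> 'g state \<Rightarrow> 'g state \<Rightarrow> real" where
  "K u \<equiv> trans_prob p u \<nu>"

lemma stochastic_kernel_K: "0 \<le> u \<Longrightarrow> u \<le> 1 \<Longrightarrow> stochastic_kernel (K u)"
  using bias_pos bias_less_1 by (intro stochastic_kernel_trans_prob[OF replacement_rule]) auto

lemma K_nonneg: "0 \<le> u \<Longrightarrow> u \<le> 1 \<Longrightarrow> 0 \<le> K u x y"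
  using stochastic_kernel_K substochastic_kernel.nonneg stochastic_kernel_def by blast

lemma K_le_1: "0 \<le> u \<Longrightarrow> u \<le> 1 \<Longrightarrow> K u x y \<le> 1"
  using stochastic_kernel_K substochastic_kernel.entry_le_1 stochastic_kernel_def by blast

lemma last_replacement_path_constant: "last (replacement_path z es) = (\<lambda>_. z g)"
  using last_replacement_path[OF events_nonempty] events_fix by (auto simp: fun_eq_iff)

lemma last_replacement_path_in_set: "last (replacement_path z es) \<in> set (replacement_path z es)"
  using events_nonempty by (metis last_in_set length_0_conv length_replacement_path)

definition step_bound :: real where
  "step_bound = Min (p ` set es) * (1/2) ^ CARD('g)"

lemma step_bound_pos: "0 < step_bound"
  unfolding step_bound_def using events_pos events_nonempty by simp

lemma step_bound_le_event: "e \<in> set es \<Longrightarrow> step_bound \<le> p e * (1/2) ^ CARD('g)"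
  unfolding step_bound_def by (simp add: mult_right_mono)

lemma step_bound_le_1: "step_bound \<le> 1"
proof -
  obtain e where "e \<in> set es" using events_nonempty by (cases es) auto
  then have "step_bound \<le> p e * (1/2) ^ CARD('g)" by (rule step_bound_le_event)
  also have "\<dots> \<le> 1"
    using replacement_rule_le_1[OF replacement_rule] by (intro mult_le_one power_le_one) auto
  finally show ?thesis .
qed

lemma K_replacement_ge:
  assumes "0 \<le> u" "u \<le> 1/2" "e \<in> set es"
  shows "step_bound \<le> K u w (w \<circ> extend_event e)"
proof -
  have "(1/2::real) ^ CARD('g) \<le> (1 - u) ^ CARD('g)" by (rule power_mono) (use assms in auto)
  then have "step_bound \<le> p e * (1 - u) ^ CARD('g)"
    using step_bound_le_event[OF assms(3)] replacement_rule_nonneg[OF replacement_rule, of e]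
    by (meson mult_left_mono order_trans)
  also have "\<dots> \<le> K u w (w \<circ> extend_event e)"
    by (rule trans_prob_replacement_ge) (use replacement_rule bias_pos bias_less_1 assms in auto)
  finally show ?thesis .
qed

lemma uniformly_escapes_polymorphic:
  assumes "0 \<le> u" "u \<le> 1/2"
  shows "uniformly_escapes (K u) polymorphic_states (length es) (step_bound ^ length es)"
  unfolding uniformly_escapes_def
proof (intro conjI ballI)
  fix x :: "'g state"
  interpret stochastic_kernel "K u" by (rule stochastic_kernel_K) (use assms in auto)
  have "last (replacement_path x es) \<notin> polymorphic_states"
    unfolding last_replacement_path_constant polymorphic_states_def all_zero_def all_one_def by (cases "x g") auto
  then show "survival (K u) polymorphic_states (length es) x \<le> 1 - step_bound ^ length es"
    using survival_le_exit_path[OF step_bound_pos step_bound_le_1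
        successively_replacement_path[of es step_bound "K u", OF K_replacement_ge[OF assms]]]
      last_replacement_path_in_set
    by (metis length_replacement_path order_refl)
qed (simp add: step_bound_pos)

text \<open>For \<open>u > 0\<close> every state reaches \<open>all_zero\<close>: fix by the replacement sequence; if that
  yields \<open>all_one\<close>, mutate the sites of an event replacing \<open>g\<close> to \<open>0\<close> and fix again.\<close>
lemma path_to_all_zero:
  assumes "0 < u" "u \<le> 1/2"
  obtains c where "0 < c" "c \<le> 1"
    "\<And>x. \<exists>ys. successively (\<lambda>x y. c \<le> K u x y) (x # ys) \<and> all_zero \<in> set ys
      \<and> length ys \<le> 2 * length es + 1"
proof -
  obtain e0 where e0: "e0 \<in> set es" "g \<in> fst e0" using events_replace by blast
  define c where "c = min step_bound (p e0 * (u * (1 - \<nu>)) ^ CARD('g))"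
  have c_pos: "0 < c"
    unfolding c_def using step_bound_pos events_pos e0 assms bias_less_1 by simp
  have c_le_1: "c \<le> 1" unfolding c_def using step_bound_le_1 by linarith
  have path: "successively (\<lambda>x y. c \<le> K u x y) (z # replacement_path z es)" for z
    using K_replacement_ge[of u] assms
    by (intro successively_replacement_path) (fastforce simp: c_def intro: min.coboundedI1)
  define z1 where "z1 = (\<lambda>h. h \<notin> fst e0 \<and> all_one h)"
  have "c \<le> p e0 * (u * (1 - \<nu>)) ^ CARD('g)" unfolding c_def by simp
  also have "\<dots> \<le> K u all_one z1"
    unfolding z1_def using replacement_rule bias_pos bias_less_1 assms
    by (intro trans_prob_mutation_to_zero_ge) auto
  finally have mutation: "c \<le> K u all_one z1" .
  have z1_path: "last (replacement_path z1 es) = all_zero"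
    unfolding last_replacement_path_constant z1_def all_zero_def using e0 by simp
  have "\<exists>ys. successively (\<lambda>x y. c \<le> K u x y) (x # ys) \<and> all_zero \<in> set ys
      \<and> length ys \<le> 2 * length es + 1" for x
  proof (cases "x g")
    case False
    then have "last (replacement_path x es) = all_zero"
      unfolding last_replacement_path_constant all_zero_def by simp
    then show ?thesis using path[of x] last_replacement_path_in_set[of x] by force
  next
    case True
    have "replacement_path x es \<noteq> []"
      using events_nonempty by (metis length_0_conv length_replacement_path)
    then have "last (x # replacement_path x es) = all_one"
      using last_replacement_path_constant[of x] True by (simp add: all_one_def)
    then have "successively (\<lambda>x y. c \<le> K u x y) ((x # replacement_path x es) @ (z1 # replacement_path z1 es))"
      using path[of x] path[of z1] mutation by (subst successively_append_iff) simp
    moreover have "all_zero \<in> set (replacement_path x es @ z1 # replacement_path z1 es)"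
      using last_replacement_path_in_set[of z1] z1_path by auto
    ultimately show ?thesis by (intro exI[of _ "replacement_path x es @ z1 # replacement_path z1 es"]) simp
  qed
  then show ?thesis using that[OF c_pos c_le_1] by blast
qed

lemma uniformly_escapes_to_all_zero:
  assumes "0 < u" "u \<le> 1/2"
  shows "\<exists>\<delta>. uniformly_escapes (K u) (-{all_zero}) (2 * length es + 1) \<delta>"
proof -
  interpret stochastic_kernel "K u" by (rule stochastic_kernel_K) (use assms in auto)
  let ?M = "2 * length es + 1"
  obtain c where c: "0 < c" "c \<le> 1"
    and paths: "\<And>x. \<exists>ys. successively (\<lambda>x y. c \<le> K u x y) (x # ys) \<and> all_zero \<in> set ys
      \<and> length ys \<le> ?M"
    using path_to_all_zero[OF assms] by blast
  have "survival (K u) (-{all_zero}) ?M x \<le> 1 - c ^ ?M" for x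
  proof -
    obtain ys where ys: "successively (\<lambda>x y. c \<le> K u x y) (x # ys)" "all_zero \<in> set ys"
      "length ys \<le> ?M"
      using paths by blast
    then have "survival (K u) (-{all_zero}) ?M x \<le> 1 - c ^ length ys"
      by (intro survival_le_exit_path[OF c]) auto
    moreover have "c ^ ?M \<le> c ^ length ys"
      using c ys(3) by (intro power_decreasing) auto
    ultimately show ?thesis by linarith
  qed
  then have "uniformly_escapes (K u) (-{all_zero}) ?M (c ^ ?M)"
    using c unfolding uniformly_escapes_def by simp
  then show ?thesis ..
qed

lemma stationary_pi_MSS:
  assumes "0 < u" "u \<le> 1/2"
  shows "stationary_dist (K u) (pi_MSS p u \<nu>)"
proof -
  interpret stochastic_kernel "K u" by (rule stochastic_kernel_K) (use assms in auto)
  obtain \<delta> where "uniformly_escapes (K u) (-{all_zero}) (2 * length es + 1) \<delta>"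
    using uniformly_escapes_to_all_zero[OF assms] by blast
  from ex1_stationary_dist[OF this] show ?thesis
    unfolding pi_MSS_def is_stationary_eq by (rule theI')
qed

text \<open>The expected time the mutation-free chain, started from the single-mutant states
  (weighted by \<open>single_mutant_rate\<close>), spends in each polymorphic state before fixation; values
  outside \<open>polymorphic_states\<close> are irrelevant.\<close>
definition sojourn :: "'g state \<Rightarrow> real" where
  "sojourn = (SOME w. \<forall>y\<in>polymorphic_states.
     w y = single_mutant_rate p y + killed_step (K 0) polymorphic_states w y)"

lemma sojourn_eq:
  "y \<in> polymorphic_states \<Longrightarrow>
    sojourn y = single_mutant_rate p y + killed_step (K 0) polymorphic_states sojourn y"
proof -
  interpret stochastic_kernel "K 0" by (rule stochastic_kernel_K) auto
  have "\<exists>w. \<forall>y\<in>polymorphic_states.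
      w y = single_mutant_rate p y + killed_step (K 0) polymorphic_states w y"
    using uniformly_escapes_polymorphic[of 0] by (auto intro: killed_equation_solvable)
  then show "y \<in> polymorphic_states \<Longrightarrow> ?thesis" unfolding sojourn_def by (rule someI_ex[THEN bspec])
qed

lemma sojourn_nonneg: "y \<in> polymorphic_states \<Longrightarrow> 0 \<le> sojourn y"
proof -
  interpret stochastic_kernel "K 0" by (rule stochastic_kernel_K) auto
  show "y \<in> polymorphic_states \<Longrightarrow> ?thesis"
    using killed_equation_solution_nonneg[OF uniformly_escapes_polymorphic[of 0]] sojourn_eq
      single_mutant_rate_nonneg[OF replacement_rule] by auto
qed

lemma sojourn_complement_eq:
  assumes "y \<in> polymorphic_states"
  shows "sojourn (complement_state y) = single_mutant_rate p (complement_state y)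
    + killed_step (K 0) polymorphic_states (\<lambda>x. sojourn (complement_state x)) y"
proof -
  have "killed_step (K 0) polymorphic_states (\<lambda>x. sojourn (complement_state x)) y
      = (\<Sum>x\<in>polymorphic_states. sojourn (complement_state x)
          * K 0 (complement_state x) (complement_state y))"
    unfolding killed_step_def by (simp add: trans_prob_no_mutation_complement)
  also have "\<dots> = killed_step (K 0) polymorphic_states sojourn (complement_state y)"
    unfolding killed_step_def by (rule sum_polymorphic_complement)
  finally show ?thesis using sojourn_eq complement_state_polymorphic[OF assms] by simp
qed

lemma sojourn_step_le:
  assumes "z \<in> polymorphic_states" "z' \<in> polymorphic_states"
  shows "sojourn z * K 0 z z' \<le> sojourn z'"
proof -
  have "sojourn z * K 0 z z' \<le> killed_step (K 0) polymorphic_states sojourn z'"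
    unfolding killed_step_def using assms(1)
    by (rule member_le_sum) (auto intro!: mult_nonneg_nonneg sojourn_nonneg K_nonneg)
  then show ?thesis
    using sojourn_eq[OF assms(2)] single_mutant_rate_nonneg[OF replacement_rule, of z'] by linarith
qed

lemma single_mutant_rate_le_sojourn:
  assumes "y \<in> polymorphic_states"
  shows "single_mutant_rate p y \<le> sojourn y"
proof -
  interpret stochastic_kernel "K 0" by (rule stochastic_kernel_K) auto
  show ?thesis
    using sojourn_eq[OF assms] killed_step_nonneg[of polymorphic_states sojourn y] sojourn_nonneg
    by simp
qed

definition fixation_flux :: real where
  "fixation_flux = (\<Sum>x\<in>polymorphic_states. sojourn x * K 0 x all_one)"

lemma single_mutant_rate_balance:
  "(\<Sum>y\<in>polymorphic_states. single_mutant_rate p y)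
    = (\<Sum>x\<in>polymorphic_states. sojourn x * K 0 x all_zero) + fixation_flux"
proof -
  interpret stochastic_kernel "K 0" by (rule stochastic_kernel_K) auto
  let ?N = polymorphic_states
  have "(\<Sum>y\<in>?N. sojourn y)
      = (\<Sum>y\<in>?N. single_mutant_rate p y) + (\<Sum>y\<in>?N. \<Sum>x\<in>?N. sojourn x * K 0 x y)"
    using sojourn_eq by (simp add: killed_step_def sum.distrib[symmetric])
  also have "(\<Sum>y\<in>?N. \<Sum>x\<in>?N. sojourn x * K 0 x y) = (\<Sum>x\<in>?N. sojourn x * (\<Sum>y\<in>?N. K 0 x y))"
    by (subst sum.swap) (simp add: sum_distrib_left)
  also have "\<dots> = (\<Sum>x\<in>?N. sojourn x * (1 - K 0 x all_zero - K 0 x all_one))"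
  proof -
    have "(\<Sum>y\<in>?N. K 0 x y) = 1 - K 0 x all_zero - K 0 x all_one" for x
      using row_sum[of x] sum_states_split[of "K 0 x"] by simp
    then show ?thesis by simp
  qed
  also have "\<dots> = (\<Sum>x\<in>?N. sojourn x) - (\<Sum>x\<in>?N. sojourn x * K 0 x all_zero) - fixation_flux"
    unfolding fixation_flux_def by (simp add: right_diff_distrib sum_subtractf)
  finally show ?thesis by simp
qed

lemma fixation_flux_complement:
  "(\<Sum>x\<in>polymorphic_states. sojourn (complement_state x) * K 0 x all_zero) = fixation_flux"
  unfolding fixation_flux_def
  using sum_polymorphic_complement[of "\<lambda>x. sojourn x * K 0 x all_one"]
  by (simp add: trans_prob_no_mutation_complement[of p \<nu> _ all_zero, symmetric])

lemma fixation_flux_pos_of_path: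
  assumes "z \<in> polymorphic_states" "0 < sojourn z" "set es' \<subseteq> set es"
    and "z \<circ> foldr (\<circ>) (map extend_event es') id = all_one"
  shows "0 < fixation_flux"
  using assms
proof (induction es' arbitrary: z)
  case Nil
  then show ?case by (simp add: polymorphic_states_def)
next
  case (Cons e es')
  define z1 where "z1 = z \<circ> extend_event e"
  have "step_bound \<le> K 0 z z1"
    unfolding z1_def using Cons.prems(3) by (intro K_replacement_ge) auto
  then have "0 < K 0 z z1" using step_bound_pos by linarith
  then have pos: "0 < sojourn z * K 0 z z1" using Cons.prems(2) by simp
  have "z \<circ> foldr (\<circ>) (map extend_event (e # es')) id = z1 \<circ> foldr (\<circ>) (map extend_event es') id"
    by (simp only: z1_def list.map(2) foldr_Cons comp_apply comp_assoc)
  then have fin: "z1 \<circ> foldr (\<circ>) (map extend_event es') id = all_one"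
    using Cons.prems(4) by metis
  show ?case
  proof (cases "z1 = all_one")
    case True
    have "sojourn z * K 0 z z1 \<le> fixation_flux"
      unfolding fixation_flux_def True using Cons.prems(1)
      by (rule member_le_sum) (auto intro!: mult_nonneg_nonneg sojourn_nonneg K_nonneg)
    then show ?thesis using pos by linarith
  next
    case False
    moreover have "z1 \<noteq> all_zero"
      using fin all_zero_ne_all_one by (auto simp: all_zero_def comp_def)
    ultimately have z1: "z1 \<in> polymorphic_states" by (simp add: polymorphic_states_def)
    have "0 < sojourn z1" using sojourn_step_le[OF Cons.prems(1) z1] pos by linarith
    then show ?thesis using Cons.IH[OF z1 _ _ fin] Cons.prems(3) by simp
  qed
qed

text \<open>The single mutant at \<open>g\<close> has positive sojourn and is fixed by the replacement sequence.\<close>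
lemma fixation_flux_pos:
  assumes "2 \<le> CARD('g)"
  shows "0 < fixation_flux"
proof -
  define y0 :: "'g state" where "y0 = (\<lambda>h. h = g)"
  have "UNIV \<noteq> {g}"
  proof
    assume "UNIV = {g}"
    then have "CARD('g) = card {g}" by (rule arg_cong)
    with assms show False by simp
  qed
  then obtain h where "h \<noteq> g" by auto
  then have y0: "y0 \<in> polymorphic_states"
    by (auto simp: polymorphic_states_def y0_def all_zero_def all_one_def fun_eq_iff)
  obtain e0 where e0: "e0 \<in> set es" "g \<in> fst e0" using events_replace by blast
  have "p e0 \<le> (\<Sum>e | {g} \<subseteq> fst e. p e)"
    using e0 by (intro member_le_sum) (auto intro: replacement_rule_nonneg[OF replacement_rule])
  also have "\<dots> = single_mutant_rate p y0"
    by (simp add: single_mutant_rate_def y0_def)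
  also have "\<dots> \<le> sojourn y0" by (rule single_mutant_rate_le_sojourn[OF y0])
  finally have "0 < sojourn y0" using events_pos e0 by force
  moreover have "y0 \<circ> foldr (\<circ>) (map extend_event es) id = all_one"
    using events_fix by (simp add: y0_def all_one_def comp_def)
  ultimately show ?thesis using fixation_flux_pos_of_path[OF y0] by blast
qed

end

section \<open>Rare-mutation asymptotics\<close>

lemma tendsto_bounded_mult_zero:
  fixes a f :: "'a \<Rightarrow> real"
  assumes "\<forall>\<^sub>F x in F. \<bar>a x\<bar> \<le> C" and "(f \<longlongrightarrow> 0) F"
  shows "((\<lambda>x. a x * f x) \<longlongrightarrow> 0) F"
proof (rule Lim_null_comparison)
  show "\<forall>\<^sub>F x in F. norm (a x * f x) \<le> C * \<bar>f x\<bar>"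
    using assms(1) by eventually_elim (simp add: abs_mult mult_right_mono)
  show "((\<lambda>x. C * \<bar>f x\<bar>) \<longlongrightarrow> 0) F"
    using tendsto_mult_right_zero[OF tendsto_rabs_zero[OF assms(2)]] by simp
qed

locale polymorphic_neutral_drift = neutral_drift p \<nu> g es
  for p :: "'g::finite event \<Rightarrow> real" and \<nu> g es +
  assumes two_sites: "2 \<le> CARD('g)"
begin

abbreviation mss :: "real \<Rightarrow> 'g state \<Rightarrow> real" where
  "mss u \<equiv> pi_MSS p u \<nu>"

lemma eventually_small_mutation: "\<forall>\<^sub>F u in at_right (0::real). 0 < u \<and> u \<le> 1/2"
  by (auto simp: eventually_at_right[of 0 "1/2"] intro!: exI[of _ "1/2"])

lemma mss_abs_le_1: "0 < u \<Longrightarrow> u \<le> 1/2 \<Longrightarrow> \<bar>mss u x\<bar> \<le> 1"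
  using stationary_pi_MSS stationary_dist_le_1[of "K u"]
  by (metis abs_of_nonneg stationary_dist_def)

lemma mss_balance_polymorphic:
  assumes "0 < u" "u \<le> 1/2" "y \<in> polymorphic_states"
  shows "mss u y / u = mss u all_zero * (K u all_zero y / u) + mss u all_one * (K u all_one y / u)
    + killed_step (K u) polymorphic_states (\<lambda>x. mss u x / u) y"
proof -
  have "mss u y = (\<Sum>x\<in>UNIV. mss u x * K u x y)"
    using stationary_pi_MSS[OF assms(1,2)] by (simp add: stationary_dist_def)
  then have "mss u y = mss u all_zero * K u all_zero y + mss u all_one * K u all_one y
      + killed_step (K u) polymorphic_states (mss u) y"
    by (simp add: sum_states_split killed_step_def)
  then show ?thesis
    using assms(1) by (simp add: killed_step_def sum_divide_distrib add_divide_distrib)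
qed

text \<open>The predicted limit behaviour of \<open>mss u y / u\<close>: mutants arise from \<open>all_zero\<close> at rate
  \<open>u \<nu>\<close> and from \<open>all_one\<close> at rate \<open>u (1 - \<nu>)\<close>, and then drift without further mutation.\<close>
definition target :: "real \<Rightarrow> 'g state \<Rightarrow> real" where
  "target u y = mss u all_zero * \<nu> * sojourn y + mss u all_one * (1 - \<nu>) * sojourn (complement_state y)"

lemma target_eq:
  assumes "y \<in> polymorphic_states"
  shows "target u y = mss u all_zero * \<nu> * single_mutant_rate p y
    + mss u all_one * (1 - \<nu>) * single_mutant_rate p (complement_state y)
    + killed_step (K 0) polymorphic_states (target u) y"
  unfolding target_def killed_step_add sojourn_complement_eq[OF assms]
  by (subst sojourn_eq[OF assms]) (simp add: algebra_simps)

lemma target_abs_le: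
  assumes "0 < u" "u \<le> 1/2" "y \<in> polymorphic_states"
  shows "\<bar>target u y\<bar> \<le> sojourn y + sojourn (complement_state y)"
proof -
  have "\<bar>mss u all_zero * \<nu>\<bar> \<le> 1" "\<bar>mss u all_one * (1 - \<nu>)\<bar> \<le> 1"
    using mss_abs_le_1[OF assms(1,2)] bias_pos bias_less_1 by (auto simp: abs_mult intro: mult_le_one)
  moreover have "0 \<le> sojourn y" "0 \<le> sojourn (complement_state y)"
    using assms(3) complement_state_polymorphic by (auto intro: sojourn_nonneg)
  ultimately have "\<bar>mss u all_zero * \<nu>\<bar> * sojourn y \<le> sojourn y"
    "\<bar>mss u all_one * (1 - \<nu>)\<bar> * sojourn (complement_state y) \<le> sojourn (complement_state y)"
    by (simp_all add: mult_left_le_one_le)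
  moreover have "\<bar>target u y\<bar> \<le> \<bar>mss u all_zero * \<nu>\<bar> * sojourn y
      + \<bar>mss u all_one * (1 - \<nu>)\<bar> * sojourn (complement_state y)"
    unfolding target_def using abs_triangle_ineq \<open>0 \<le> sojourn y\<close> \<open>0 \<le> sojourn (complement_state y)\<close>
    by (metis abs_mult abs_of_nonneg)
  ultimately show ?thesis by linarith
qed

lemma eventually_mss_bounded: "\<forall>\<^sub>F u in at_right 0. \<bar>mss u x\<bar> \<le> 1"
  using eventually_small_mutation by eventually_elim (simp add: mss_abs_le_1)

lemma eventually_K_bounded: "\<forall>\<^sub>F u in at_right 0. \<bar>K u x y\<bar> \<le> 1"
  using eventually_small_mutation by eventually_elim (simp add: K_nonneg K_le_1)

lemma eventually_target_bounded:
  "x \<in> polymorphic_states \<Longrightarrow>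
    \<forall>\<^sub>F u in at_right 0. \<bar>target u x\<bar> \<le> sojourn x + sojourn (complement_state x)"
  using eventually_small_mutation by eventually_elim (simp add: target_abs_le)

definition residual :: "real \<Rightarrow> 'g state \<Rightarrow> real" where
  "residual u y = mss u all_zero * (K u all_zero y / u - \<nu> * single_mutant_rate p y)
    + mss u all_one * (K u all_one y / u - (1 - \<nu>) * single_mutant_rate p (complement_state y))
    + (\<Sum>x\<in>polymorphic_states. target u x * (K u x y - K 0 x y))"

lemma residual_eq:
  assumes "y \<in> polymorphic_states"
  shows "mss u all_zero * (K u all_zero y / u) + mss u all_one * (K u all_one y / u)
    + killed_step (K u) polymorphic_states (target u) y - target u y = residual u y"
proof -
  have "(\<Sum>x\<in>polymorphic_states. target u x * (K u x y - K 0 x y))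
      = killed_step (K u) polymorphic_states (target u) y - killed_step (K 0) polymorphic_states (target u) y"
    by (simp add: killed_step_def right_diff_distrib sum_subtractf)
  then show ?thesis
    unfolding residual_def target_eq[OF assms, of u] by (simp add: algebra_simps)
qed

lemma residual_tendsto_0:
  assumes "y \<in> polymorphic_states"
  shows "((\<lambda>u. residual u y) \<longlongrightarrow> 0) (at_right 0)"
proof -
  have y: "y \<noteq> all_zero" "y \<noteq> all_one" using assms by (auto simp: polymorphic_states_def)
  have "((\<lambda>u. \<Sum>x\<in>polymorphic_states. target u x * (K u x y - K 0 x y)) \<longlongrightarrow> 0) (at_right 0)"
    by (intro tendsto_null_sum tendsto_bounded_mult_zero[OF eventually_target_bounded]
        LIM_zero trans_prob_tendsto_no_mutation)
  moreover have "((\<lambda>u. mss u all_zero * (K u all_zero y / u - \<nu> * single_mutant_rate p y)) \<longlongrightarrow> 0)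
      (at_right 0)"
    by (intro tendsto_bounded_mult_zero[OF eventually_mss_bounded] LIM_zero trans_prob_from_all_zero_tendsto y)
  moreover have "((\<lambda>u. mss u all_one * (K u all_one y / u
      - (1 - \<nu>) * single_mutant_rate p (complement_state y))) \<longlongrightarrow> 0) (at_right 0)"
    by (intro tendsto_bounded_mult_zero[OF eventually_mss_bounded] LIM_zero trans_prob_from_all_one_tendsto y)
  ultimately show ?thesis unfolding residual_def by (intro tendsto_add_zero)
qed

text \<open>The uniform escape bound turns the pointwise vanishing of the residual into the vanishing
  of the deviation of \<open>mss u / u\<close> from the target.\<close>
lemma deviation_tendsto_0:
  "((\<lambda>u. l1_norm_on polymorphic_states (\<lambda>y. mss u y / u - target u y)) \<longlongrightarrow> 0) (at_right 0)"
proof (rule Lim_null_comparison)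
  let ?N = polymorphic_states and ?\<delta> = "step_bound ^ length es"
  show "\<forall>\<^sub>F u in at_right 0. norm (l1_norm_on ?N (\<lambda>y. mss u y / u - target u y))
      \<le> real (length es) / ?\<delta> * (\<Sum>y\<in>?N. \<bar>residual u y\<bar>)"
    using eventually_small_mutation
  proof eventually_elim
    case (elim u)
    then interpret stochastic_kernel "K u" by (intro stochastic_kernel_K) auto
    have "?\<delta> * l1_norm_on ?N (\<lambda>y. mss u y / u - target u y)
        \<le> real (length es) * l1_norm_on ?N (\<lambda>y. mss u all_zero * (K u all_zero y / u)
          + mss u all_one * (K u all_one y / u) + killed_step (K u) ?N (target u) y - target u y)"
      using elim uniformly_escapes_polymorphic mss_balance_polymorphic
      by (intro l1_norm_solution_diff_le) auto
    also have "l1_norm_on ?N (\<lambda>y. mss u all_zero * (K u all_zero y / u)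
        + mss u all_one * (K u all_one y / u) + killed_step (K u) ?N (target u) y - target u y)
        = (\<Sum>y\<in>?N. \<bar>residual u y\<bar>)"
      unfolding l1_norm_on_def by (intro sum.cong refl arg_cong[where f = abs] residual_eq)
    finally show ?case
      using step_bound_pos l1_norm_on_nonneg[of ?N "\<lambda>y. mss u y / u - target u y"]
      by (simp add: field_simps)
  qed
  show "((\<lambda>u. real (length es) / ?\<delta> * (\<Sum>y\<in>?N. \<bar>residual u y\<bar>)) \<longlongrightarrow> 0) (at_right 0)"
    by (intro tendsto_mult_right_zero tendsto_null_sum tendsto_rabs_zero residual_tendsto_0)
qed

lemma deviation_tendsto_0_at:
  assumes "y \<in> polymorphic_states"
  shows "((\<lambda>u. mss u y / u - target u y) \<longlongrightarrow> 0) (at_right 0)"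
proof (rule Lim_null_comparison[OF always_eventually deviation_tendsto_0], intro allI)
  show "norm (mss u y / u - target u y)
      \<le> l1_norm_on polymorphic_states (\<lambda>y. mss u y / u - target u y)" for u
    unfolding l1_norm_on_def real_norm_def using assms by (intro member_le_sum) auto
qed

definition flux_error :: "real \<Rightarrow> real" where
  "flux_error u =
     mss u all_zero * (\<nu> * (\<Sum>y\<in>polymorphic_states. single_mutant_rate p y) - (1 - K u all_zero all_zero) / u)
     + mss u all_one * (K u all_one all_zero / u)
     + (\<Sum>x\<in>polymorphic_states. K u x all_zero * (mss u x / u - target u x))
     + (\<Sum>x\<in>polymorphic_states. target u x * (K u x all_zero - K 0 x all_zero))"

text \<open>Stationarity at \<open>all_zero\<close>, divided by \<open>u\<close>, compared with the flux balance of \<open>sojourn\<close>.\<close>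
lemma flux_identity:
  assumes "0 < u" "u \<le> 1/2"
  shows "(mss u all_zero * \<nu> - mss u all_one * (1 - \<nu>)) * fixation_flux = flux_error u"
proof -
  let ?N = polymorphic_states
  define a A where "a = mss u all_zero" and "A = mss u all_one"
  define M where "M = (\<Sum>y\<in>?N. single_mutant_rate p y)"
  define S where "S = (\<Sum>x\<in>?N. mss u x * K u x all_zero)"
  define T0 where "T0 = (\<Sum>x\<in>?N. target u x * K 0 x all_zero)"
  have "a = a * K u all_zero all_zero + A * K u all_one all_zero + S"
    using stationary_pi_MSS[OF assms]
    by (simp add: stationary_dist_def sum_states_split a_def A_def S_def)
  then have escape: "a * ((1 - K u all_zero all_zero) / u) = A * (K u all_one all_zero / u) + S / u"
    using assms(1) by (simp add: field_simps)
  have "T0 = a * \<nu> * (\<Sum>x\<in>?N. sojourn x * K 0 x all_zero)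
      + A * (1 - \<nu>) * (\<Sum>x\<in>?N. sojourn (complement_state x) * K 0 x all_zero)"
    unfolding T0_def target_def a_def A_def
    by (simp add: distrib_right sum.distrib sum_distrib_left mult.assoc)
  then have T0: "T0 = a * \<nu> * (M - fixation_flux) + A * (1 - \<nu>) * fixation_flux"
    unfolding M_def single_mutant_rate_balance fixation_flux_complement by simp
  have "flux_error u = a * \<nu> * M - a * ((1 - K u all_zero all_zero) / u) + A * (K u all_one all_zero / u) + S / u - T0"
    unfolding flux_error_def a_def A_def M_def S_def T0_def
    by (simp add: algebra_simps sum_subtractf sum.distrib sum_divide_distrib)
  also have "\<dots> = a * \<nu> * M - T0" using escape by simp
  also have "\<dots> = (a * \<nu> - A * (1 - \<nu>)) * fixation_flux" unfolding T0 by (simp add: algebra_simps)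
  finally show ?thesis by (simp add: a_def A_def)
qed

lemma leaving_all_zero_tendsto:
  "((\<lambda>u. (1 - K u all_zero all_zero) / u)
    \<longlongrightarrow> \<nu> * (\<Sum>y\<in>polymorphic_states. single_mutant_rate p y)) (at_right 0)"
proof -
  have "(1 - K u all_zero all_zero) / u
      = K u all_zero all_one / u + (\<Sum>y\<in>polymorphic_states. K u all_zero y / u)" for u
  proof -
    have "1 - K u all_zero all_zero = K u all_zero all_one + (\<Sum>y\<in>polymorphic_states. K u all_zero y)"
      using trans_prob_row_sum[OF replacement_rule, of u \<nu> all_zero] by (simp add: sum_states_split)
    then show ?thesis by (simp add: add_divide_distrib sum_divide_distrib)
  qed
  moreover have "((\<lambda>u. K u all_zero all_one / u + (\<Sum>y\<in>polymorphic_states. K u all_zero y / u))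
      \<longlongrightarrow> \<nu> * single_mutant_rate p all_one + (\<Sum>y\<in>polymorphic_states. \<nu> * single_mutant_rate p y))
      (at_right 0)"
    by (intro tendsto_add tendsto_sum trans_prob_from_all_zero_tendsto)
      (auto simp: polymorphic_states_def all_zero_def all_one_def fun_eq_iff)
  ultimately show ?thesis
    by (simp add: single_mutant_rate_all_one[OF two_sites] sum_distrib_left)
qed

lemma flux_error_tendsto_0: "(flux_error \<longlongrightarrow> 0) (at_right 0)"
proof -
  have "((\<lambda>u. \<nu> * (\<Sum>y\<in>polymorphic_states. single_mutant_rate p y) - (1 - K u all_zero all_zero) / u)
      \<longlongrightarrow> 0) (at_right 0)"
    using tendsto_diff[OF tendsto_const[of "\<nu> * (\<Sum>y\<in>polymorphic_states. single_mutant_rate p y)"]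
        leaving_all_zero_tendsto] by simp
  moreover have "((\<lambda>u. K u all_one all_zero / u) \<longlongrightarrow> 0) (at_right 0)"
    using trans_prob_from_all_one_tendsto[of all_zero p \<nu>] all_zero_ne_all_one
    by (simp add: single_mutant_rate_all_one[OF two_sites])
  ultimately show ?thesis
    unfolding flux_error_def
    by (intro tendsto_add_zero tendsto_null_sum tendsto_bounded_mult_zero[OF eventually_mss_bounded]
        tendsto_bounded_mult_zero[OF eventually_K_bounded] deviation_tendsto_0_at
        tendsto_bounded_mult_zero[OF eventually_target_bounded] LIM_zero trans_prob_tendsto_no_mutation)
qed

lemma flux_balance_tendsto_0:
  "((\<lambda>u. mss u all_zero * \<nu> - mss u all_one * (1 - \<nu>)) \<longlongrightarrow> 0) (at_right 0)"
proof -
  have "\<forall>\<^sub>F u in at_right 0. flux_error u / fixation_flux = mss u all_zero * \<nu> - mss u all_one * (1 - \<nu>)"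
    using eventually_small_mutation
    by eventually_elim (use fixation_flux_pos[OF two_sites] in \<open>simp add: flux_identity[symmetric]\<close>)
  with tendsto_divide_zero[OF flux_error_tendsto_0] show ?thesis
    by (rule Lim_transform_eventually)
qed

lemma monomorphic_mass_tendsto:
  "((\<lambda>u. mss u all_zero + mss u all_one) \<longlongrightarrow> 1) (at_right 0)"
proof -
  let ?N = polymorphic_states
  have "\<forall>\<^sub>F u in at_right 0. \<bar>\<Sum>y\<in>?N. target u y\<bar> \<le> (\<Sum>y\<in>?N. sojourn y + sojourn (complement_state y))"
    using eventually_small_mutation
    by eventually_elim (intro order_trans[OF sum_abs] sum_mono target_abs_le; simp)
  then have "((\<lambda>u. 1 - (u * (\<Sum>y\<in>?N. mss u y / u - target u y) + (\<Sum>y\<in>?N. target u y) * u))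
      \<longlongrightarrow> 1 - (0 * 0 + 0)) (at_right 0)"
    by (intro tendsto_intros tendsto_null_sum deviation_tendsto_0_at tendsto_bounded_mult_zero)
      (auto intro: tendsto_ident_at)
  moreover have "\<forall>\<^sub>F u in at_right 0.
      1 - (u * (\<Sum>y\<in>?N. mss u y / u - target u y) + (\<Sum>y\<in>?N. target u y) * u)
      = mss u all_zero + mss u all_one"
    using eventually_small_mutation
  proof eventually_elim
    case (elim u)
    then have "(\<Sum>y\<in>UNIV. mss u y) = 1"
      using stationary_pi_MSS by (simp add: stationary_dist_def)
    moreover have "u * (\<Sum>y\<in>?N. mss u y / u - target u y) + (\<Sum>y\<in>?N. target u y) * u
        = (\<Sum>y\<in>?N. mss u y)"
      using elim by (simp add: sum_subtractf right_diff_distrib sum_distrib_left sum_distrib_right algebra_simps)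
    ultimately show ?case by (simp add: sum_states_split)
  qed
  ultimately show ?thesis by (simp add: Lim_transform_eventually)
qed

lemma mss_all_zero_tendsto: "((\<lambda>u. mss u all_zero) \<longlongrightarrow> 1 - \<nu>) (at_right 0)"
proof -
  have "((\<lambda>u. (1 - \<nu>) * (mss u all_zero + mss u all_one) + (mss u all_zero * \<nu> - mss u all_one * (1 - \<nu>)))
      \<longlongrightarrow> (1 - \<nu>) * 1 + 0) (at_right 0)"
    by (intro tendsto_intros monomorphic_mass_tendsto flux_balance_tendsto_0)
  then show ?thesis by (simp add: algebra_simps)
qed

lemma mss_all_one_tendsto: "((\<lambda>u. mss u all_one) \<longlongrightarrow> \<nu>) (at_right 0)"
  using tendsto_diff[OF monomorphic_mass_tendsto mss_all_zero_tendsto] by simp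

lemma mss_over_mutation_tendsto:
  assumes "y \<in> polymorphic_states"
  shows "((\<lambda>u. mss u y / u) \<longlongrightarrow> \<nu> * (1 - \<nu>) * (sojourn y + sojourn (complement_state y))) (at_right 0)"
proof -
  have "((\<lambda>u. (mss u y / u - target u y) + target u y)
      \<longlongrightarrow> 0 + ((1 - \<nu>) * \<nu> * sojourn y + \<nu> * (1 - \<nu>) * sojourn (complement_state y))) (at_right 0)"
    unfolding target_def
    by (intro tendsto_intros mss_all_zero_tendsto mss_all_one_tendsto deviation_tendsto_0_at[OF assms,
          unfolded target_def])
  then show ?thesis by (simp add: algebra_simps)
qed

lemma sum_sojourn_pos: "0 < (\<Sum>x\<in>polymorphic_states. sojourn x + sojourn (complement_state x))"
proof -
  have "fixation_flux \<le> (\<Sum>x\<in>polymorphic_states. sojourn x + sojourn (complement_state x))"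
    unfolding fixation_flux_def
  proof (rule sum_mono)
    fix x :: "'g state" assume x: "x \<in> polymorphic_states"
    have "sojourn x * K 0 x all_one \<le> sojourn x"
      using sojourn_nonneg[OF x] K_le_1[of 0] by (simp add: mult_left_le)
    moreover have "0 \<le> sojourn (complement_state x)"
      using sojourn_nonneg complement_state_polymorphic[OF x] by blast
    ultimately show "sojourn x * K 0 x all_one \<le> sojourn x + sojourn (complement_state x)" by linarith
  qed
  then show ?thesis using fixation_flux_pos[OF two_sites] by linarith
qed

lemma pi_RMC_eq:
  assumes "y \<in> polymorphic_states"
  shows "pi_RMC p \<nu> y = (sojourn y + sojourn (complement_state y))
    / (\<Sum>x\<in>polymorphic_states. sojourn x + sojourn (complement_state x))"
proof -
  let ?N = polymorphic_states and ?c = "\<nu> * (1 - \<nu>)"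
  let ?S = "\<Sum>x\<in>?N. sojourn x + sojourn (complement_state x)"
  have "?c \<noteq> 0" using bias_pos bias_less_1 by simp
  have "((\<lambda>u. (mss u y / u) / (\<Sum>x\<in>?N. mss u x / u))
      \<longlongrightarrow> (?c * (sojourn y + sojourn (complement_state y))) / (\<Sum>x\<in>?N. ?c * (sojourn x + sojourn (complement_state x))))
      (at_right 0)"
    using \<open>?c \<noteq> 0\<close> sum_sojourn_pos
    by (intro tendsto_divide tendsto_sum mss_over_mutation_tendsto assms) (auto simp: sum_distrib_left[symmetric])
  moreover have "\<forall>\<^sub>F u in at_right 0. (mss u y / u) / (\<Sum>x\<in>?N. mss u x / u)
      = mss u y / (1 - mss u all_zero - mss u all_one)"
    using eventually_small_mutation
  proof eventually_elim
    case (elim u)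
    then have "(\<Sum>y\<in>UNIV. mss u y) = 1"
      using stationary_pi_MSS by (simp add: stationary_dist_def)
    then show ?case
      using elim by (simp add: sum_states_split sum_divide_distrib[symmetric])
  qed
  ultimately have "((\<lambda>u. mss u y / (1 - mss u all_zero - mss u all_one))
      \<longlongrightarrow> (sojourn y + sojourn (complement_state y)) / ?S) (at_right 0)"
    using \<open>?c \<noteq> 0\<close> by (simp add: Lim_transform_eventually sum_distrib_left[symmetric])
  then show ?thesis
    unfolding pi_RMC_def by (rule tendsto_Lim[OF trivial_limit_at_right_real])
qed

lemma pi_RMC_complement:
  assumes "y \<in> polymorphic_states"
  shows "pi_RMC p \<nu> (complement_state y) = pi_RMC p \<nu> y"
  using pi_RMC_eq[OF assms] pi_RMC_eq[OF complement_state_polymorphic[OF assms]] by simp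

end

theorem proposition2:
  fixes p :: "('g::finite) event \<Rightarrow> real" and \<nu> :: real and x :: "'g state"
  assumes "replacement_rule p"
    and "fixation_axiom p"
    and "0 < \<nu>" and "\<nu> < 1"
    and "x \<noteq> all_zero" and "x \<noteq> all_one"
  shows "pi_RMC p \<nu> (complement_state x) = pi_RMC p \<nu> x"
proof -
  obtain g es where "1 \<le> length es" "\<forall>e\<in>set es. 0 < p e" "\<exists>e\<in>set es. g \<in> fst e"
    "\<forall>h. foldr (\<circ>) (map extend_event es) id h = g"
    using assms(2) unfolding fixation_axiom_def by blast
  then interpret neutral_drift p \<nu> g es
    using assms(1,3,4) by unfold_locales auto
  obtain h1 h2 where "x h1" "\<not> x h2"
    using assms(5,6) by (auto simp: all_zero_def all_one_def fun_eq_iff)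
  then have "2 \<le> card {h1, h2}" by (cases "h1 = h2") auto
  also have "\<dots> \<le> CARD('g)" by (rule card_mono) auto
  finally interpret polymorphic_neutral_drift p \<nu> g es by unfold_locales
  show ?thesis
    using assms(5,6) by (intro pi_RMC_complement) (simp add: polymorphic_states_def)
qed

end
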